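(* Let $\mathcal{M}=\langle M,\circ_M,e_M\rangle$ and $\mathcal{N}=\langle N,\circ_N,e_N\rangle$ be mge monoids. Then the Cartesian product $\mathcal{M}\times\mathcal{N}$ (with componentwise operation and unit $\langle e_M,e_N\rangle$) is an mge monoid.
   Context: In a monoid $\langle M,\circ,e\rangle$, a tuple $\langle m_1,\dots,m_n\rangle\in M^n$ is equalizable if there is $\langle x_1,\dots,x_n\rangle\in M^n$ (an equalizer) with $m_1x_1=\dots=m_nx_n$; an equalizer is a most general equalizer (mge) if every equalizer has the form $\langle x_1x,\dots,x_nx\rangle$ for some $x\in M$. An mge monoid is a monoid with right cancellation ($ac=bc\Rightarrow a=b$) in which every equalizable pair has an mge. *)

theory Defs
  imports "HOL-Algebra.Group"
begin

definition equalizer :: "('a, 'b) monoid_scheme \<Rightarrow> 'a \<Rightarrow> 'a \<Rightarrow> 'a \<Rightarrow> 'a \<Rightarrow> bool" where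
  "equalizer M m1 m2 x1 x2 \<longleftrightarrow>
     x1 \<in> carrier M \<and> x2 \<in> carrier M \<and> m1 \<otimes>\<^bsub>M\<^esub> x1 = m2 \<otimes>\<^bsub>M\<^esub> x2"

definition equalizable :: "('a, 'b) monoid_scheme \<Rightarrow> 'a \<Rightarrow> 'a \<Rightarrow> bool" where
  "equalizable M m1 m2 \<longleftrightarrow> (\<exists>x1 x2. equalizer M m1 m2 x1 x2)"

definition mge :: "('a, 'b) monoid_scheme \<Rightarrow> 'a \<Rightarrow> 'a \<Rightarrow> 'a \<Rightarrow> 'a \<Rightarrow> bool" where
  "mge M m1 m2 x1 x2 \<longleftrightarrow>
     equalizer M m1 m2 x1 x2 \<and>
     (\<forall>y1 y2. equalizer M m1 m2 y1 y2 \<longrightarrow>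
        (\<exists>x\<in>carrier M. y1 = x1 \<otimes>\<^bsub>M\<^esub> x \<and> y2 = x2 \<otimes>\<^bsub>M\<^esub> x))"

definition right_cancellative :: "('a, 'b) monoid_scheme \<Rightarrow> bool" where
  "right_cancellative M \<longleftrightarrow>
     (\<forall>a\<in>carrier M. \<forall>b\<in>carrier M. \<forall>c\<in>carrier M.
        a \<otimes>\<^bsub>M\<^esub> c = b \<otimes>\<^bsub>M\<^esub> c \<longrightarrow> a = b)"

definition mge_monoid :: "('a, 'b) monoid_scheme \<Rightarrow> bool" where
  "mge_monoid M \<longleftrightarrow>
     monoid M \<and> right_cancellative M \<and>
     (\<forall>m1\<in>carrier M. \<forall>m2\<in>carrier M.
        equalizable M m1 m2 \<longrightarrow> (\<exists>x1 x2. mge M m1 m2 x1 x2))"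

end

theory Submission
  imports Defs
begin

text \<open>Equalizers, equalizability and cancellation in a direct product are all
  componentwise, and pairing the componentwise most general equalizers gives a most
  general equalizer of the product, the factor witnessing generality being the pair of
  the two factors.\<close>

lemma equalizer_DirProd_iff:
  "equalizer (M \<times>\<times> N) (a1, b1) (a2, b2) (x1, y1) (x2, y2) \<longleftrightarrow>
   equalizer M a1 a2 x1 x2 \<and> equalizer N b1 b2 y1 y2"
  unfolding equalizer_def by auto

lemma equalizable_DirProd_iff:
  "equalizable (M \<times>\<times> N) (a1, b1) (a2, b2) \<longleftrightarrow>
   equalizable M a1 a2 \<and> equalizable N b1 b2"
  unfolding equalizable_def by (auto simp: equalizer_DirProd_iff)

lemma mge_DirProd:
  assumes "mge M a1 a2 u1 u2" and "mge N b1 b2 v1 v2"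
  shows "mge (M \<times>\<times> N) (a1, b1) (a2, b2) (u1, v1) (u2, v2)"
  unfolding mge_def
proof (intro conjI allI impI)
  show "equalizer (M \<times>\<times> N) (a1, b1) (a2, b2) (u1, v1) (u2, v2)"
    using assms by (simp add: mge_def equalizer_DirProd_iff)
next
  fix w1 w2
  assume w: "equalizer (M \<times>\<times> N) (a1, b1) (a2, b2) w1 w2"
  obtain c1 d1 c2 d2 where ww: "w1 = (c1, d1)" "w2 = (c2, d2)" by fastforce
  with w have "equalizer M a1 a2 c1 c2" "equalizer N b1 b2 d1 d2"
    by (simp_all add: equalizer_DirProd_iff)
  then obtain s t where "s \<in> carrier M" "c1 = u1 \<otimes>\<^bsub>M\<^esub> s" "c2 = u2 \<otimes>\<^bsub>M\<^esub> s"
    and "t \<in> carrier N" "d1 = v1 \<otimes>\<^bsub>N\<^esub> t" "d2 = v2 \<otimes>\<^bsub>N\<^esub> t"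
    using assms unfolding mge_def by meson
  with ww show "\<exists>x\<in>carrier (M \<times>\<times> N).
      w1 = (u1, v1) \<otimes>\<^bsub>M \<times>\<times> N\<^esub> x \<and> w2 = (u2, v2) \<otimes>\<^bsub>M \<times>\<times> N\<^esub> x"
    by (intro bexI[of _ "(s, t)"]) auto
qed

lemma right_cancellative_DirProd:
  "right_cancellative M \<Longrightarrow> right_cancellative N \<Longrightarrow> right_cancellative (M \<times>\<times> N)"
  unfolding right_cancellative_def by auto

theorem lemma1:
  fixes M :: "('a, 'c) monoid_scheme" and N :: "('b, 'd) monoid_scheme"
  assumes "mge_monoid M" and "mge_monoid N"
  shows "mge_monoid (M \<times>\<times> N)"
proof -
  have "\<exists>x1 x2. mge (M \<times>\<times> N) (a1, b1) (a2, b2) x1 x2"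
    if "(a1, b1) \<in> carrier (M \<times>\<times> N)" "(a2, b2) \<in> carrier (M \<times>\<times> N)"
      and "equalizable (M \<times>\<times> N) (a1, b1) (a2, b2)" for a1 b1 a2 b2
  proof -
    from that have "a1 \<in> carrier M" "a2 \<in> carrier M" "equalizable M a1 a2"
      and "b1 \<in> carrier N" "b2 \<in> carrier N" "equalizable N b1 b2"
      by (auto simp: equalizable_DirProd_iff)
    with assms obtain u1 u2 v1 v2
      where "mge M a1 a2 u1 u2" and "mge N b1 b2 v1 v2"
      unfolding mge_monoid_def by meson
    then show ?thesis by (blast intro: mge_DirProd)
  qed
  moreover have "monoid (M \<times>\<times> N)" "right_cancellative (M \<times>\<times> N)"
    using assms by (auto simp: mge_monoid_def intro: DirProd_monoid right_cancellative_DirProd)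
  ultimately show ?thesis
    unfolding mge_monoid_def by auto
qed

end
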